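(* Let $D$ be a domain in $\mathbb{R}^2$ and let $u$ be panharmonic in $D$, i.e. $u$ is a real-valued $C^2(D)$ solution of $\nabla^2 u - \mu^2 u = 0$ for some $\mu \in \mathbb{R}\setminus\{0\}$. Then $$a(\mu r)\,u(x) = \frac{1}{\pi r^2}\int_{B_r(x)} u(y)\,\log\frac{r}{|x-y|}\,\mathrm{d}y, \qquad a(t) = \frac{2\,[I_0(t)-1]}{t^2},$$ for every $x \in D$ and every $r>0$ with $\overline{B_r(x)} \subset D$.
   Context: $B_r(x) = \{y : |y-x| < r\}$ is the open disc; $I_0$ is the modified Bessel function of order $0$. *)

theory Defs
  imports "HOL-Analysis.Analysis"
begin

definition bessel_I0 :: "real \<Rightarrow> real" where
  "bessel_I0 t = (\<Sum>k. (t / 2) ^ (2 * k) / (fact k)\<^sup>2)"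

definition a_fun :: "real \<Rightarrow> real" where
  "a_fun t = 2 * (bessel_I0 t - 1) / t\<^sup>2"

definition partial :: "2 \<Rightarrow> (real^2 \<Rightarrow> real) \<Rightarrow> real^2 \<Rightarrow> real" where
  "partial i f x = deriv (\<lambda>t. f (x + t *\<^sub>R axis i 1)) 0"

definition has_partial_on :: "2 \<Rightarrow> (real^2 \<Rightarrow> real) \<Rightarrow> (real^2) set \<Rightarrow> bool" where
  "has_partial_on i f D \<longleftrightarrow> (\<forall>x\<in>D. (\<lambda>t. f (x + t *\<^sub>R axis i 1)) differentiable (at 0))"

definition C2_on :: "(real^2) set \<Rightarrow> (real^2 \<Rightarrow> real) \<Rightarrow> bool" where
  "C2_on D u \<longleftrightarrow> continuous_on D u \<and>
     (\<forall>i. has_partial_on i u D \<and> continuous_on D (partial i u)) \<and>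
     (\<forall>i j. has_partial_on j (partial i u) D \<and> continuous_on D (partial j (partial i u)))"

definition laplacian :: "(real^2 \<Rightarrow> real) \<Rightarrow> real^2 \<Rightarrow> real" where
  "laplacian u x = (\<Sum>i\<in>UNIV. partial i (partial i u) x)"

definition panharmonic :: "real \<Rightarrow> (real^2) set \<Rightarrow> (real^2 \<Rightarrow> real) \<Rightarrow> bool" where
  "panharmonic \<mu> D u \<longleftrightarrow> C2_on D u \<and> (\<forall>x\<in>D. laplacian u x - \<mu>\<^sup>2 * u x = 0)"

end

theory Submission
  imports Defs "HOL-Real_Asymp.Real_Asymp"
begin

(* Let S(rho) be the integral of u over the circle of radius rho about x, taken with respect to
   the angle. In polar coordinates rho times the Laplacian is d/drho (rho d/drho) plus an
   angular derivative, which integrates to zero over a period; hence (rho S')' = mu^2 rho S.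
   Integrating this against ln(rho/t) gives the Volterra equation
     S(rho) = S(0) + mu^2 * integral_0^rho t S(t) ln(rho/t) dt,
   whose kernel maps the k-th term of the series of S(0) I0(mu t) to the (k+1)-st, so Picard
   iteration forces S(rho) = 2 pi u(x) I0(mu rho). Finally, in polar coordinates the integral
   over the disc is integral_0^r t S(t) ln(r/t) dt = (S(r) - S(0)) / mu^2. *)

section \<open>Partial derivatives in the plane\<close>

lemma norm_vec2: "norm (v::real^2) = sqrt ((v$1)^2 + (v$2)^2)"
  by (simp add: norm_vec_def L2_set_def sum_2)

lemma vec2_eq_axis_sum: "(v::real^2) = v$1 *\<^sub>R axis 1 1 + v$2 *\<^sub>R axis 2 1"
  by (simp add: vec_eq_iff forall_2 axis_def)

definition dir_deriv :: "(real^2 \<Rightarrow> real) \<Rightarrow> real^2 \<Rightarrow> real^2 \<Rightarrow> real" where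
  "dir_deriv f y v = partial 1 f y * v$1 + partial 2 f y * v$2"

lemma has_real_derivative_partial:
  assumes "has_partial_on i f D" "y + s *\<^sub>R axis i 1 \<in> D"
  shows "((\<lambda>t. f (y + t *\<^sub>R axis i 1)) has_real_derivative partial i f (y + s *\<^sub>R axis i 1)) (at s)"
proof -
  let ?w = "y + s *\<^sub>R axis i 1"
  have "(\<lambda>t. f (?w + t *\<^sub>R axis i 1)) differentiable (at 0)"
    using assms unfolding has_partial_on_def by blast
  then have "((\<lambda>t. f (?w + t *\<^sub>R axis i 1)) has_real_derivative partial i f ?w) (at 0)"
    unfolding partial_def using DERIV_deriv_iff_real_differentiable by blast
  then have "((\<lambda>t. f (y + (t + s) *\<^sub>R axis i 1)) has_real_derivative partial i f ?w) (at 0)"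
    by (simp add: algebra_simps scaleR_add_left)
  then show ?thesis
    using DERIV_shift[of "\<lambda>t. f (y + t *\<^sub>R axis i 1)" "partial i f ?w" 0 s] by simp
qed

lemma partial_increment_bound:
  assumes "has_partial_on i f D" "convex S" "S \<subseteq> D"
    and "\<And>z. z \<in> S \<Longrightarrow> \<bar>partial i f z - c\<bar> \<le> e"
    and "w \<in> S" "w + h *\<^sub>R axis i 1 \<in> S"
  shows "\<bar>f (w + h *\<^sub>R axis i 1) - f w - c * h\<bar> \<le> e * \<bar>h\<bar>"
proof -
  have line: "w + t *\<^sub>R axis i 1 \<in> S" if "t \<in> closed_segment 0 h" for t
  proof -
    from that obtain v where v: "0 \<le> v" "v \<le> 1" "t = v * h"
      by (auto simp: closed_segment_def)
    then have "w + t *\<^sub>R axis i 1 = (1 - v) *\<^sub>R w + v *\<^sub>R (w + h *\<^sub>R axis i 1)"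
      by (simp add: algebra_simps)
    with v convexD[OF assms(2,5,6), of "1 - v" v] show ?thesis by simp
  qed
  have "((\<lambda>t. f (w + t *\<^sub>R axis i 1) - c * t) has_real_derivative
          partial i f (w + t *\<^sub>R axis i 1) - c) (at t within closed_segment 0 h)"
    if "t \<in> closed_segment 0 h" for t
  proof -
    have "w + t *\<^sub>R axis i 1 \<in> D" using line[OF that] assms(3) by blast
    then show ?thesis
      by (rule DERIV_diff[OF has_field_derivative_at_within
            [OF has_real_derivative_partial[OF assms(1)]] DERIV_cmult_Id])
  qed
  moreover have "norm (partial i f (w + t *\<^sub>R axis i 1) - c) \<le> e"
    if "t \<in> closed_segment 0 h" for t
    using assms(4)[OF line[OF that]] by simp
  ultimately have "norm ((f (w + h *\<^sub>R axis i 1) - c * h) - (f (w + 0 *\<^sub>R axis i 1) - c * 0))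
      \<le> e * norm (h - 0)"
    by (rule field_differentiable_bound[OF convex_closed_segment _ _ ends_in_segment(2)
          ends_in_segment(1)])
  then show ?thesis by (simp add: algebra_simps)
qed

(* Step first along the first axis, where the partial derivative at y controls the increment,
   then along the second, where the mean value bound and continuity of the second partial do. *)
lemma has_derivative_dir_deriv:
  fixes f :: "real^2 \<Rightarrow> real"
  assumes D: "open D" and partials: "\<And>i. has_partial_on i f D"
    and cont: "\<And>i. continuous_on D (partial i f)" and y: "y \<in> D"
  shows "(f has_derivative dir_deriv f y) (at y)"
  unfolding has_derivative_at_alt
proof (intro conjI allI impI)
  show "bounded_linear (dir_deriv f y)"
    unfolding dir_deriv_def
    by (intro bounded_linear_add bounded_linear_compose[OF bounded_linear_mult_right]
        bounded_linear_vec_nth)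
  fix e :: real assume e: "e > 0"
  obtain d0 where d0: "d0 > 0" "ball y d0 \<subseteq> D"
    using D y open_contains_ball by blast
  obtain d1 where d1: "d1 > 0"
    "\<And>z. z \<in> D \<Longrightarrow> dist z y < d1 \<Longrightarrow> dist (partial 2 f z) (partial 2 f y) < e/2"
    using cont[of 2] y e unfolding continuous_on_iff by (meson half_gt_zero)
  have "((\<lambda>t. f (y + t *\<^sub>R axis 1 1)) has_real_derivative partial 1 f y) (at 0)"
    using has_real_derivative_partial[of 1 f D y 0] partials y by simp
  then obtain d2 where d2: "d2 > 0" "\<And>t. norm (t - 0) < d2 \<Longrightarrow>
      norm (f (y + t *\<^sub>R axis 1 1) - f (y + 0 *\<^sub>R axis 1 1) - partial 1 f y * (t - 0))
        \<le> e/2 * norm (t - 0)"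
    unfolding has_field_derivative_def has_derivative_at_alt using e by (meson half_gt_zero)
  define d where "d = min d0 (min d1 d2)"
  have ball: "ball y d \<subseteq> D"
    using d0 by (auto simp: d_def)
  show "\<exists>d>0. \<forall>z. norm (z - y) < d \<longrightarrow>
          norm (f z - f y - dir_deriv f y (z - y)) \<le> e * norm (z - y)"
  proof (intro exI[of _ d] conjI allI impI)
    show "d > 0" using d0 d1 d2 by (simp add: d_def)
    fix z assume "norm (z - y) < d"
    define h where "h = z - y"
    have hd: "norm h < d" using \<open>norm (z - y) < d\<close> by (simp add: h_def)
    have h1: "\<bar>h$1\<bar> \<le> norm h" and h2: "\<bar>h$2\<bar> \<le> norm h"
      unfolding norm_vec2 by (auto intro: real_le_rsqrt)
    define w where "w = y + h$1 *\<^sub>R axis 1 1"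
    have z: "z = w + h$2 *\<^sub>R axis 2 1"
      using vec2_eq_axis_sum[of h] by (simp add: w_def h_def algebra_simps)
    have "\<bar>f z - f w - partial 2 f y * h$2\<bar> \<le> e/2 * \<bar>h$2\<bar>"
      unfolding z
    proof (rule partial_increment_bound[OF partials convex_ball ball])
      show "\<bar>partial 2 f v - partial 2 f y\<bar> \<le> e/2" if "v \<in> ball y d" for v
        using d1(2)[of v] that ball by (force simp: d_def dist_real_def dist_commute)
      show "w \<in> ball y d"
        using h1 hd by (simp add: w_def dist_norm)
      show "w + h$2 *\<^sub>R axis 2 1 \<in> ball y d"
        using hd unfolding z[symmetric] by (simp add: h_def dist_norm norm_minus_commute)
    qed
    moreover have "\<bar>f w - f y - partial 1 f y * h$1\<bar> \<le> e/2 * \<bar>h$1\<bar>"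
      using d2(2)[of "h$1"] h1 hd by (simp add: w_def d_def)
    moreover have "norm (f z - f y - dir_deriv f y h)
        = \<bar>(f z - f w - partial 2 f y * h$2) + (f w - f y - partial 1 f y * h$1)\<bar>"
      by (simp add: dir_deriv_def)
    ultimately have "norm (f z - f y - dir_deriv f y h) \<le> e/2 * norm h + e/2 * norm h"
      using h1 h2 e by (smt (verit) mult_left_mono half_gt_zero)
    then show "norm (f z - f y - dir_deriv f y (z - y)) \<le> e * norm (z - y)"
      by (simp add: h_def)
  qed
qed

lemma has_real_derivative_comp_dir_deriv:
  fixes f :: "real^2 \<Rightarrow> real"
  assumes "open D" "\<And>i. has_partial_on i f D" "\<And>i. continuous_on D (partial i f)"
    and "(\<gamma> has_vector_derivative \<gamma>') (at s within T)" "\<gamma> s \<in> D"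
  shows "((\<lambda>s. f (\<gamma> s)) has_real_derivative dir_deriv f (\<gamma> s) \<gamma>') (at s within T)"
proof -
  have "(f has_derivative dir_deriv f (\<gamma> s)) (at (\<gamma> s) within \<gamma> ` T)"
    using has_derivative_dir_deriv[OF assms(1-3,5)] by (rule has_derivative_at_withinI)
  from diff_chain_within[OF assms(4)[unfolded has_vector_derivative_def] this]
  show ?thesis
    unfolding has_field_derivative_def o_def
    by (rule has_derivative_eq_rhs) (auto simp: dir_deriv_def algebra_simps)
qed

lemma has_real_derivative_vec_nth:
  assumes "(v has_vector_derivative v') (at s within T)"
  shows "((\<lambda>s. v s $ i) has_real_derivative v' $ i) (at s within T)"
  using bounded_linear.has_derivative[OF bounded_linear_vec_nth
      assms[unfolded has_vector_derivative_def]]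
  by (simp add: has_field_derivative_def mult_commute_abs)

definition dir_deriv2 :: "(real^2 \<Rightarrow> real) \<Rightarrow> real^2 \<Rightarrow> real^2 \<Rightarrow> real^2 \<Rightarrow> real" where
  "dir_deriv2 f y v w = dir_deriv (partial 1 f) y v * w$1 + dir_deriv (partial 2 f) y v * w$2"

lemma dir_deriv_zero [simp]: "dir_deriv f y 0 = 0"
  and dir_deriv_uminus [simp]: "dir_deriv f y (- v) = - dir_deriv f y v"
  and dir_deriv2_scaleR [simp]: "dir_deriv2 f y (c *\<^sub>R v) w = c * dir_deriv2 f y v w"
  by (simp_all add: dir_deriv_def dir_deriv2_def algebra_simps)

lemma has_real_derivative_dir_deriv_comp:
  fixes f :: "real^2 \<Rightarrow> real"
  assumes D: "open D" and "\<And>i j. has_partial_on j (partial i f) D"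
    and "\<And>i j. continuous_on D (partial j (partial i f))"
    and \<gamma>: "(\<gamma> has_vector_derivative \<gamma>') (at s within T)" "\<gamma> s \<in> D"
    and v: "(v has_vector_derivative v') (at s within T)"
  shows "((\<lambda>s. dir_deriv f (\<gamma> s) (v s)) has_real_derivative
           dir_deriv2 f (\<gamma> s) \<gamma>' (v s) + dir_deriv f (\<gamma> s) v') (at s within T)"
proof -
  have "((\<lambda>s. partial i f (\<gamma> s)) has_real_derivative dir_deriv (partial i f) (\<gamma> s) \<gamma>')
          (at s within T)" for i
    by (rule has_real_derivative_comp_dir_deriv[OF D assms(2,3) \<gamma>])
  with has_real_derivative_vec_nth[OF v] show ?thesis
    unfolding dir_deriv_def dir_deriv2_def
    by (auto intro!: derivative_eq_intros simp: algebra_simps)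
qed

definition rad_dir :: "real \<Rightarrow> real^2" where
  "rad_dir t = cos t *\<^sub>R axis 1 1 + sin t *\<^sub>R axis 2 1"

definition ang_dir :: "real \<Rightarrow> real^2" where
  "ang_dir t = (- sin t) *\<^sub>R axis 1 1 + cos t *\<^sub>R axis 2 1"

lemma rad_dir_nth [simp]: "rad_dir t $ 1 = cos t" "rad_dir t $ 2 = sin t"
  and ang_dir_nth [simp]: "ang_dir t $ 1 = - sin t" "ang_dir t $ 2 = cos t"
  by (simp_all add: rad_dir_def ang_dir_def axis_def)

lemma norm_rad_dir [simp]: "norm (rad_dir t) = 1"
  by (simp add: norm_vec2)

lemma has_vector_derivative_rad_dir: "(rad_dir has_vector_derivative ang_dir t) (at t within T)"
  unfolding rad_dir_def ang_dir_def by (auto intro!: derivative_eq_intros)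

lemma has_vector_derivative_ang_dir: "(ang_dir has_vector_derivative - rad_dir t) (at t within T)"
  unfolding rad_dir_def ang_dir_def by (auto intro!: derivative_eq_intros)

lemma rad_dir_2pi: "rad_dir (2 * pi) = rad_dir 0" and ang_dir_2pi: "ang_dir (2 * pi) = ang_dir 0"
  by (simp_all add: rad_dir_def ang_dir_def)

lemma dir_deriv2_rad_dir_add_ang_dir:
  "dir_deriv2 f y (rad_dir t) (rad_dir t) + dir_deriv2 f y (ang_dir t) (ang_dir t) = laplacian f y"
proof -
  have "cos t ^ 2 + sin t ^ 2 = 1" by simp
  then show ?thesis
    unfolding dir_deriv2_def dir_deriv_def laplacian_def sum_2 rad_dir_nth ang_dir_nth by algebra
qed

(* The bracket is the derivative in t of dir_deriv f (x + rho *R rad_dir t) (ang_dir t);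
   the rest is d/drho (rho d/drho). *)
lemma polar_laplacian:
  "dir_deriv f y (rad_dir t) + \<rho> * dir_deriv2 f y (rad_dir t) (rad_dir t)
     + (\<rho> * dir_deriv2 f y (ang_dir t) (ang_dir t) - dir_deriv f y (rad_dir t))
   = \<rho> * laplacian f y"
proof -
  have "dir_deriv f y (rad_dir t) + \<rho> * dir_deriv2 f y (rad_dir t) (rad_dir t)
      + (\<rho> * dir_deriv2 f y (ang_dir t) (ang_dir t) - dir_deriv f y (rad_dir t))
    = \<rho> * (dir_deriv2 f y (rad_dir t) (rad_dir t) + dir_deriv2 f y (ang_dir t) (ang_dir t))"
    by (simp add: algebra_simps)
  then show ?thesis by (simp only: dir_deriv2_rad_dir_add_ang_dir)
qed

lemma continuous_on_slice:
  assumes "continuous_on (A \<times> B) (\<lambda>p. F (fst p) (snd p))" "s \<in> A"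
  shows "continuous_on B (F s)"
proof -
  have "continuous_on B (\<lambda>t. (\<lambda>p. F (fst p) (snd p)) (s, t))"
    by (rule continuous_on_compose2[OF assms(1)]) (use assms(2) in \<open>auto intro!: continuous_intros\<close>)
  then show ?thesis by simp
qed

lemma has_integral_integral_slice:
  fixes F :: "real \<Rightarrow> real \<Rightarrow> real"
  assumes "continuous_on (A \<times> {c..d}) (\<lambda>p. F (fst p) (snd p))" "s \<in> A"
  shows "(F s has_integral integral {c..d} (F s)) {c..d}"
  using integrable_continuous_interval[OF continuous_on_slice[OF assms]] by blast

lemma has_real_derivative_integral_param:
  fixes F G :: "real \<Rightarrow> real \<Rightarrow> real"
  assumes "\<And>s t. s \<in> {a..b} \<Longrightarrow> ((\<lambda>s. F s t) has_real_derivative G s t) (at s within {a..b})"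
    and "continuous_on ({a..b} \<times> {c..d}) (\<lambda>p. F (fst p) (snd p))"
    and "continuous_on ({a..b} \<times> {c..d}) (\<lambda>p. G (fst p) (snd p))"
    and "s \<in> {a..b}"
  shows "((\<lambda>s. integral {c..d} (F s)) has_real_derivative integral {c..d} (G s))
           (at s within {a..b})"
  using leibniz_rule_field_derivative[of "{a..b}" c d F G s] assms
    has_integral_integral_slice[OF assms(2)]
  by (auto simp: case_prod_beta)

lemma has_vector_derivative_polar_radius:
  "((\<lambda>\<rho>. x + \<rho> *\<^sub>R rad_dir t) has_vector_derivative rad_dir t) (at \<rho> within T)"
  by (auto intro!: derivative_eq_intros)

lemma has_vector_derivative_polar_angle:
  "((\<lambda>t. x + \<rho> *\<^sub>R rad_dir t) has_vector_derivative \<rho> *\<^sub>R ang_dir t) (at t within T)"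
  by (auto intro!: derivative_eq_intros has_vector_derivative_rad_dir)

definition circle_integral :: "(real^2 \<Rightarrow> real) \<Rightarrow> real^2 \<Rightarrow> real \<Rightarrow> real" where
  "circle_integral f x \<rho> = integral {0..2*pi} (\<lambda>t. f (x + \<rho> *\<^sub>R rad_dir t))"

lemma continuous_on_polar:
  assumes "continuous_on D g" "cball x r \<subseteq> D"
  shows "continuous_on ({0..r} \<times> B) (\<lambda>p. g (x + fst p *\<^sub>R rad_dir (snd p)))"
proof (rule continuous_on_compose2[OF assms(1)])
  show "continuous_on ({0..r} \<times> B) (\<lambda>p. x + fst p *\<^sub>R rad_dir (snd p))"
    unfolding rad_dir_def by (intro continuous_intros)
  show "(\<lambda>p. x + fst p *\<^sub>R rad_dir (snd p)) ` ({0..r} \<times> B) \<subseteq> D"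
    using assms(2) by (auto simp: dist_norm)
qed

section \<open>Integration in polar coordinates\<close>

definition vec2_of_pair :: "real \<times> real \<Rightarrow> real^2" where
  "vec2_of_pair p = vector [fst p, snd p]"

definition pair_of_vec2 :: "real^2 \<Rightarrow> real \<times> real" where
  "pair_of_vec2 v = (v$1, v$2)"

lemma vec2_of_pair_of_vec2 [simp]: "vec2_of_pair (pair_of_vec2 v) = v"
  by (simp add: vec2_of_pair_def pair_of_vec2_def vec_eq_iff forall_2)

lemma pair_of_vec2_of_pair [simp]: "pair_of_vec2 (vec2_of_pair p) = p"
  by (simp add: vec2_of_pair_def pair_of_vec2_def)

lemma vector_nth_eta: "vector [v$1, v$2] = (v::real^2)"
  by (simp add: vec_eq_iff forall_2)

lemma image_vec2_of_pair_cbox: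
  "vec2_of_pair ` cbox (a1, a2) (b1, b2) = cbox (vector [a1, a2]) (vector [b1, b2])"
proof (intro set_eqI iffI)
  fix v :: "real^2" assume "v \<in> cbox (vector [a1, a2]) (vector [b1, b2])"
  then have "pair_of_vec2 v \<in> cbox (a1, a2) (b1, b2)"
    by (auto simp: pair_of_vec2_def mem_box_cart forall_2)
  then show "v \<in> vec2_of_pair ` cbox (a1, a2) (b1, b2)"
    by (metis vec2_of_pair_of_vec2 image_eqI)
qed (auto simp: vec2_of_pair_def mem_box_cart forall_2)

lemma image_pair_of_vec2_cbox: "pair_of_vec2 ` cbox a b = cbox (a$1, a$2) (b$1, b$2)"
proof -
  have "pair_of_vec2 ` cbox a b = pair_of_vec2 ` vec2_of_pair ` cbox (a$1, a$2) (b$1, b$2)"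
    by (simp only: image_vec2_of_pair_cbox vector_nth_eta)
  then show ?thesis by (simp add: image_image)
qed

lemma content_image_vec2_of_pair:
  "measure lborel (vec2_of_pair ` cbox p q) = measure lborel (cbox p q)"
proof -
  obtain a1 a2 b1 b2 where pq: "p = (a1, a2)" "q = (b1, b2)" by (cases p, cases q) auto
  show ?thesis
  proof (cases "a1 \<le> b1 \<and> a2 \<le> b2")
    case True
    then have ne: "cbox (vector [a1, a2]) (vector [b1, b2]) \<noteq> ({} :: (real^2) set)"
      by (auto simp: interval_ne_empty_cart forall_2)
    show ?thesis
      using True unfolding pq image_vec2_of_pair_cbox content_cbox_cart[OF ne] content_Pair
      by (simp add: UNIV_2)
  next
    case False
    then have "cbox (vector [a1, a2]) (vector [b1, b2]) = ({} :: (real^2) set)"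
      unfolding interval_eq_empty_cart by (metis not_le vector_2)
    with False show ?thesis
      unfolding pq image_vec2_of_pair_cbox content_Pair by auto
  qed
qed

lemma continuous_vec2_of_pair: "continuous (at p) vec2_of_pair"
proof -
  have eq: "vec2_of_pair = (\<lambda>p. fst p *\<^sub>R axis 1 1 + snd p *\<^sub>R axis 2 1)"
    by (auto simp: vec2_of_pair_def vec_eq_iff forall_2 axis_def)
  show ?thesis unfolding eq by (intro continuous_intros)
qed

lemma integral_cbox_vec2_iterated:
  fixes f :: "real^2 \<Rightarrow> real"
  assumes f: "continuous_on (cbox (vector [a1, a2]) (vector [b1, b2])) f"
  shows "integral (cbox (vector [a1, a2]) (vector [b1, b2])) f
       = integral {a1..b1} (\<lambda>s. integral {a2..b2} (\<lambda>t. f (vector [s, t])))"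
proof -
  let ?C = "cbox (vector [a1, a2]) (vector [b1, b2]) :: (real^2) set"
  have "((\<lambda>p. f (vec2_of_pair p)) has_integral (1 / 1) *\<^sub>R integral ?C f) (pair_of_vec2 ` ?C)"
  proof (rule has_integral_twiddle[where r = 1])
    show "\<exists>w z. vec2_of_pair ` cbox u v = cbox w z" for u v
      by (cases u, cases v) (auto simp: image_vec2_of_pair_cbox)
    show "\<exists>w z. pair_of_vec2 ` cbox u v = cbox w z" for u v
      by (auto simp: image_pair_of_vec2_cbox)
    show "(f has_integral integral ?C f) ?C"
      using integrable_continuous[OF f] by (rule integrable_integral)
  qed (simp_all add: continuous_vec2_of_pair content_image_vec2_of_pair)
  then have "((\<lambda>p. f (vec2_of_pair p)) has_integral integral ?C f) (cbox (a1, a2) (b1, b2))"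
    by (simp add: image_pair_of_vec2_cbox)
  moreover have "continuous_on (cbox (a1, a2) (b1, b2)) (\<lambda>p. f (vec2_of_pair p))"
    by (rule continuous_on_compose2[OF f]) (auto simp: image_vec2_of_pair_cbox[symmetric]
        intro: continuous_at_imp_continuous_on continuous_vec2_of_pair)
  ultimately show ?thesis
    using integral_prod_continuous[of a1 a2 b1 b2 "\<lambda>p. f (vec2_of_pair p)"]
    by (simp add: vec2_of_pair_def integral_unique)
qed

definition polar_map :: "real^2 \<Rightarrow> real^2 \<Rightarrow> real^2" where
  "polar_map x p = x + p$1 *\<^sub>R rad_dir (p$2)"

abbreviation polar_box :: "real \<Rightarrow> (real^2) set" where
  "polar_box r \<equiv> box (vector [0, 0]) (vector [r, 2*pi])"

lemma has_derivative_polar_map: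
  "(polar_map x has_derivative (\<lambda>k. k$1 *\<^sub>R rad_dir (p$2) + (p$1 * k$2) *\<^sub>R ang_dir (p$2)))
     (at p within S)"
proof -
  have "((\<lambda>p::real^2. rad_dir (p$2)) has_derivative (\<lambda>k. k$2 *\<^sub>R ang_dir (p$2))) (at p within S)"
    using diff_chain_within[OF bounded_linear_imp_has_derivative[OF bounded_linear_vec_nth]
        has_vector_derivative_rad_dir[unfolded has_vector_derivative_def]]
    by (simp add: o_def)
  then show ?thesis
    unfolding polar_map_def[abs_def]
    by (auto intro!: derivative_eq_intros bounded_linear_imp_has_derivative bounded_linear_vec_nth
        simp: algebra_simps)
qed

lemma det_polar_map_derivative:
  fixes p :: "real^2"
  shows "det (matrix (\<lambda>k::real^2. k$1 *\<^sub>R rad_dir (p$2) + (p$1 * k$2) *\<^sub>R ang_dir (p$2))) = p$1"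
proof -
  have "det (matrix (\<lambda>k::real^2. k$1 *\<^sub>R rad_dir (p$2) + (p$1 * k$2) *\<^sub>R ang_dir (p$2)))
      = p$1 * (cos (p$2))\<^sup>2 + p$1 * (sin (p$2))\<^sup>2"
    by (simp add: det_2 matrix_def axis_def power2_eq_square algebra_simps)
  then show ?thesis by (simp add: distrib_left[symmetric])
qed

lemma dist_polar_map [simp]: "dist x (polar_map x p) = \<bar>p$1\<bar>"
  by (simp add: polar_map_def dist_norm)

lemma rad_dir_inj_on: "inj_on rad_dir {0<..<2*pi}"
proof (rule inj_onI)
  fix a b assume a: "a \<in> {0<..<2*pi}" and b: "b \<in> {0<..<2*pi}" and "rad_dir a = rad_dir b"
  then have "sin a = sin b \<and> cos a = cos b" by (metis rad_dir_nth)
  then obtain n :: int where n: "a = b + 2 * pi * n" using sin_cos_eq_iff by blast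
  with a b have "\<bar>2 * pi * real_of_int n\<bar> < 2 * pi" by auto
  then have "\<bar>real_of_int n\<bar> < 1" by (simp add: abs_mult)
  then have "n = 0" by linarith
  with n show "a = b" by simp
qed

lemma mem_polar_box:
  fixes p :: "real^2"
  shows "p \<in> polar_box r \<longleftrightarrow> 0 < p$1 \<and> p$1 < r \<and> 0 < p$2 \<and> p$2 < 2*pi"
  by (simp add: mem_box_cart forall_2)

lemma inj_on_polar_map: "inj_on (polar_map x) (polar_box r)"
proof (rule inj_onI)
  fix p q
  assume p: "p \<in> polar_box r" and q: "q \<in> polar_box r"
    and eq: "polar_map x p = polar_map x q"
  then have 1: "p$1 = q$1"
    using dist_polar_map[of x p] dist_polar_map[of x q] by (simp add: mem_polar_box)
  with eq p have "rad_dir (p$2) = rad_dir (q$2)"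
    by (simp add: polar_map_def mem_polar_box)
  with p q have "p$2 = q$2"
    using rad_dir_inj_on by (auto simp: mem_polar_box inj_on_def)
  with 1 show "p = q" by (simp add: vec_eq_iff forall_2)
qed

lemma polar_map_box_subset_ball: "polar_map x ` polar_box r \<subseteq> ball x r"
  by (auto simp: mem_polar_box)

(* The polar map misses only the points x + s *R rad_dir 0 with 0 <= s < r of the disc. *)
lemma ball_minus_polar_map_box:
  "ball x r - polar_map x ` polar_box r \<subseteq> {y. axis 2 1 \<bullet> y = x$2}"
proof
  fix y assume y: "y \<in> ball x r - polar_map x ` polar_box r"
  show "y \<in> {y. axis 2 1 \<bullet> y = x$2}"
  proof (rule ccontr)
    assume "y \<notin> {y. axis 2 1 \<bullet> y = x$2}"
    then have v2: "(y - x)$2 \<noteq> 0" by (simp add: inner_axis')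
    define \<rho> where "\<rho> = norm (y - x)"
    have \<rho>: "0 < \<rho>" "\<rho> < r"
      using v2 y by (auto simp: \<rho>_def dist_norm norm_minus_commute)
    have "((y - x)$1 / \<rho>)\<^sup>2 + ((y - x)$2 / \<rho>)\<^sup>2 = (((y - x)$1)\<^sup>2 + ((y - x)$2)\<^sup>2) / \<rho>\<^sup>2"
      by (simp add: power_divide add_divide_distrib)
    also have "\<dots> = 1"
      using v2 unfolding \<rho>_def norm_vec2 by simp
    finally obtain t where t: "0 \<le> t" "t < 2*pi" "(y - x)$1 / \<rho> = cos t" "(y - x)$2 / \<rho> = sin t"
      by (rule sincos_total_2pi)
    have "t \<noteq> 0" using t(4) v2 \<rho> by auto
    then have "(vector [\<rho>, t] :: real^2) \<in> polar_box r"
      using t \<rho> by (simp add: mem_polar_box)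
    moreover have "y = polar_map x (vector [\<rho>, t])"
      using t \<rho> by (simp add: polar_map_def vec_eq_iff forall_2 field_simps)
    ultimately show False using y by blast
  qed
qed

lemma integral_ball_eq_polar_map_box:
  fixes h :: "real^2 \<Rightarrow> 'a::banach"
  shows "integral (ball x r) h = integral (polar_map x ` polar_box r) h"
proof (rule integral_spike_set)
  have "negligible (ball x r - polar_map x ` polar_box r)"
    by (rule negligible_subset[OF negligible_hyperplane ball_minus_polar_map_box])
      (simp add: axis_eq_0_iff)
  then show "negligible {y \<in> ball x r - polar_map x ` polar_box r. h y \<noteq> 0}"
    by (rule negligible_subset) auto
  show "negligible {y \<in> polar_map x ` polar_box r - ball x r. h y \<noteq> 0}"
    using polar_map_box_subset_ball[of x r] by (intro empty_imp_negligible) blast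
qed

lemma integral_polar_map_box:
  fixes h :: "real^2 \<Rightarrow> real"
  assumes "continuous_on (cbox (vector [0, 0]) (vector [r, 2*pi])) (\<lambda>p. p$1 * h (polar_map x p))"
  shows "integral (polar_map x ` polar_box r) h
       = integral (polar_box r) (\<lambda>p. p$1 * h (polar_map x p))"
proof -
  let ?P = "polar_box r :: (real^2) set"
  define g' where "g' p = (\<lambda>k::real^2. k$1 *\<^sub>R rad_dir (p$2) + (p$1 * k$2) *\<^sub>R ang_dir (p$2))"
    for p :: "real^2"
  have jacobian: "\<bar>det (matrix (g' p))\<bar> *\<^sub>R vec (h (polar_map x p))
      = (vec (p$1 * h (polar_map x p)) :: real^1)"
    if "p \<in> ?P" for p
    using that by (simp add: g'_def det_polar_map_derivative mem_polar_box vec_eq_iff)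
  have "continuous_on (cbox (vector [0, 0]) (vector [r, 2*pi]))
      (\<lambda>p. vec (p$1 * h (polar_map x p)) :: real^1)"
    using assms unfolding vec_def by (intro continuous_on_vec_lambda)
  then have "(\<lambda>p. vec (p$1 * h (polar_map x p)) :: real^1) absolutely_integrable_on ?P"
    unfolding absolutely_integrable_on_open_interval by (rule absolutely_integrable_continuous)
  then have "(\<lambda>p. \<bar>det (matrix (g' p))\<bar> *\<^sub>R (vec (h (polar_map x p)) :: real^1))
      absolutely_integrable_on ?P"
    by (rule absolutely_integrable_spike[OF _ negligible_empty]) (simp add: jacobian)
  then have "integral (polar_map x ` ?P) (\<lambda>y. vec (h y) :: real^1) =
      integral ?P (\<lambda>p. \<bar>det (matrix (g' p))\<bar> *\<^sub>R (vec (h (polar_map x p)) :: real^1))"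
    unfolding g'_def
    by (intro integral_change_of_variables inj_on_polar_map has_derivative_polar_map) auto
  also have "\<dots> = integral ?P (\<lambda>p. vec (p$1 * h (polar_map x p)))"
    using jacobian by (intro integral_cong) simp
  finally show ?thesis
    by (simp add: integral_on_1_eq)
qed

lemma integral_ball_polar:
  fixes h :: "real^2 \<Rightarrow> real"
  assumes "continuous_on (cbox (vector [0, 0]) (vector [r, 2*pi])) (\<lambda>p. p$1 * h (polar_map x p))"
  shows "integral (ball x r) h =
           integral {0..r} (\<lambda>\<rho>. integral {0..2*pi} (\<lambda>t. \<rho> * h (x + \<rho> *\<^sub>R rad_dir t)))"
proof -
  have "integral (ball x r) h = integral (polar_map x ` polar_box r) h"
    by (rule integral_ball_eq_polar_map_box)
  also have "\<dots> = integral (polar_box r) (\<lambda>p. p$1 * h (polar_map x p))"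
    by (rule integral_polar_map_box[OF assms])
  also have "\<dots> = integral (cbox (vector [0, 0]) (vector [r, 2*pi])) (\<lambda>p. p$1 * h (polar_map x p))"
    by (rule integral_open_interval)
  also have "\<dots> = integral {0..r} (\<lambda>\<rho>. integral {0..2*pi} (\<lambda>t. \<rho> * h (x + \<rho> *\<^sub>R rad_dir t)))"
    using integral_cbox_vec2_iterated[OF assms] by (simp add: polar_map_def)
  finally show ?thesis .
qed

section \<open>A Volterra equation with logarithmic kernel\<close>

(* At t = 0 the function takes the junk value 0 (c / 0 = 0 and ln 0 = 0), which is also its
   limit from the right. *)
lemma continuous_on_mult_ln_div:
  assumes "c > 0"
  shows "continuous_on {0..} (\<lambda>t::real. t * ln (c / t))"
proof (clarsimp simp: continuous_on_eq_continuous_within)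
  fix t :: real assume "0 \<le> t"
  show "continuous (at t within {0..}) (\<lambda>t. t * ln (c / t))"
  proof (cases "t = 0")
    case True
    have "((\<lambda>t::real. t * ln (c / t)) \<longlongrightarrow> 0) (at_right 0)"
      using assms by real_asymp
    then show ?thesis
      using True by (simp add: continuous_within at_within_Ici_at_right)
  next
    case False
    then have "isCont (\<lambda>t. t * ln (c / t)) t"
      using \<open>0 \<le> t\<close> assms by (auto intro!: continuous_intros)
    then show ?thesis by (rule continuous_at_imp_continuous_at_within)
  qed
qed

lemma continuous_on_mult_mult_ln_div:
  assumes "continuous_on {0..c} f"
  shows "continuous_on {0..c} (\<lambda>t::real. t * f t * ln (c / t))"
proof (cases "c > 0")
  case True
  have "continuous_on {0..c} (\<lambda>t. t * ln (c / t))"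
    by (rule continuous_on_subset[OF continuous_on_mult_ln_div[OF True]]) auto
  then have "continuous_on {0..c} (\<lambda>t. f t * (t * ln (c / t)))"
    by (rule continuous_on_mult[OF assms])
  then show ?thesis by (simp add: algebra_simps)
next
  case False
  then have "{0..c} = {} \<or> {0..c} = {0}" by auto
  then show ?thesis by auto
qed

(* For n = 0 the integrand is unbounded near 0; the gauge integral exists nonetheless, since
   the primitive is continuous on the closed interval. *)
lemma has_integral_power_mult_ln_div:
  assumes "0 \<le> s"
  shows "((\<lambda>t. t ^ n * ln (s / t)) has_integral s ^ (n + 1) / (n + 1)\<^sup>2) {0..s}"
proof -
  define m :: real where "m = n + 1"
  have "m > 0" by (simp add: m_def)
  define F where "F t = t ^ (n + 1) * ln (s / t) / m + t ^ (n + 1) / m\<^sup>2" for t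
  have "((\<lambda>t. t ^ n * ln (s / t)) has_integral (F s - F 0)) {0..s}"
  proof (rule fundamental_theorem_of_calculus_interior[OF assms])
    have "continuous_on {0..s} (\<lambda>t. t ^ (n + 1) * ln (s / t))"
      using continuous_on_mult_mult_ln_div[of s "\<lambda>t. t ^ n"] by (simp add: continuous_on_power)
    then show "continuous_on {0..s} F"
      unfolding F_def using \<open>m > 0\<close> by (auto intro!: continuous_intros)
    fix t assume t: "t \<in> {0<..<s}"
    have power: "((\<lambda>t. t ^ (n + 1)) has_real_derivative m * t ^ n) (at t)"
      using DERIV_pow[of "n + 1" t] by (simp add: m_def)
    have ln: "((\<lambda>t. ln (s / t)) has_real_derivative - 1 / t) (at t)"
      using t by (auto intro!: derivative_eq_intros simp: field_simps power2_eq_square)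
    have "(F has_real_derivative
        ((m * t ^ n * ln (s / t) + - 1 / t * t ^ (n + 1)) / m + m * t ^ n / m\<^sup>2)) (at t)"
      unfolding F_def
      by (rule DERIV_add[OF DERIV_cdivide[OF DERIV_mult[OF power ln]] DERIV_cdivide[OF power]])
    also have "(m * t ^ n * ln (s / t) + - 1 / t * t ^ (n + 1)) / m + m * t ^ n / m\<^sup>2
        = t ^ n * ln (s / t)"
      using t \<open>m > 0\<close> by (simp add: field_simps power2_eq_square)
    finally show "(F has_vector_derivative t ^ n * ln (s / t)) (at t)"
      by (simp add: has_real_derivative_iff_has_vector_derivative)
  qed
  then show ?thesis by (cases "s = 0") (simp_all add: F_def m_def)
qed

definition bessel_term :: "real \<Rightarrow> nat \<Rightarrow> real" where
  "bessel_term t k = (t / 2) ^ (2 * k) / (fact k)\<^sup>2"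

lemma bessel_I0_eq_suminf: "bessel_I0 t = (\<Sum>k. bessel_term t k)"
  unfolding bessel_I0_def bessel_term_def ..

lemma bessel_term_0 [simp]: "bessel_term t 0 = 1"
  by (simp add: bessel_term_def)

lemma bessel_term_nonneg: "bessel_term t k \<ge> 0"
  by (simp add: bessel_term_def zero_le_even_power)

lemma summable_bessel_term: "summable (bessel_term t)"
proof (rule summable_comparison_test'[where N = 0, OF summable_exp[of "(t / 2)\<^sup>2"]])
  fix k :: nat
  have "norm (bessel_term t k) = ((t / 2)\<^sup>2) ^ k / (fact k)\<^sup>2"
    using bessel_term_nonneg[of t k] by (simp add: bessel_term_def power_mult)
  also have "\<dots> \<le> ((t / 2)\<^sup>2) ^ k / fact k"
  proof (rule divide_left_mono)
    have "(1::real) \<le> fact k" by simp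
    then show "fact k \<le> (fact k :: real)\<^sup>2"
      by (simp add: power2_eq_square)
  qed auto
  also have "\<dots> = inverse (fact k) * ((t / 2)\<^sup>2) ^ k"
    by (rule divide_inverse_commute)
  finally show "norm (bessel_term t k) \<le> inverse (fact k) * ((t / 2)\<^sup>2) ^ k" .
qed

lemma bessel_term_Suc:
  "bessel_term (\<mu> * s) (Suc k) =
     \<mu>\<^sup>2 * (\<mu> / 2) ^ (2 * k) / (fact k)\<^sup>2 * (s ^ (2 * k + 2) / (2 * real k + 2)\<^sup>2)"
proof -
  have "(\<mu> * s / 2) ^ (2 * Suc k) = ((\<mu> / 2) * s) ^ (2 * k + 2)" by simp
  also have "\<dots> = (\<mu> / 2) ^ (2 * k) * (\<mu> / 2)\<^sup>2 * s ^ (2 * k + 2)"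
    by (simp only: power_mult_distrib power_add mult_ac)
  finally have pow: "(\<mu> * s / 2) ^ (2 * Suc k) = (\<mu> / 2) ^ (2 * k) * (\<mu> / 2)\<^sup>2 * s ^ (2 * k + 2)" .
  have fact: "(fact (Suc k) :: real) = (real k + 1) * fact k" by simp
  have "bessel_term (\<mu> * s) (Suc k) =
      (\<mu> / 2) ^ (2 * k) * (\<mu> / 2)\<^sup>2 * s ^ (2 * k + 2) / ((real k + 1) * fact k)\<^sup>2"
    unfolding bessel_term_def pow fact ..
  moreover have "A * (\<mu> / 2)\<^sup>2 * P / ((n + 1) * F)\<^sup>2 = \<mu>\<^sup>2 * A / F\<^sup>2 * (P / (2 * n + 2)\<^sup>2)"
    if "F \<noteq> 0" "0 \<le> n" for A P F n :: real
    using that by (simp add: field_simps power2_eq_square)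
  ultimately show ?thesis by simp
qed

lemma has_integral_bessel_term:
  assumes "0 \<le> s"
  shows "((\<lambda>t. \<mu>\<^sup>2 * (t * bessel_term (\<mu> * t) k * ln (s / t))) has_integral
           bessel_term (\<mu> * s) (Suc k)) {0..s}"
proof -
  define C where "C = \<mu>\<^sup>2 * (\<mu> / 2) ^ (2 * k) / (fact k)\<^sup>2"
  have "(\<lambda>t. \<mu>\<^sup>2 * (t * bessel_term (\<mu> * t) k * ln (s / t))) =
        (\<lambda>t. C * (t ^ (2 * k + 1) * ln (s / t)))"
    by (simp add: C_def bessel_term_def power_mult_distrib power_divide mult_ac)
  moreover have "((\<lambda>t. C * (t ^ (2 * k + 1) * ln (s / t))) has_integral
      C * (s ^ (2 * k + 2) / (2 * real k + 2)\<^sup>2)) {0..s}"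
    using has_integral_mult_right[OF has_integral_power_mult_ln_div[OF assms, of "2 * k + 1"], of C]
    by (simp add: algebra_simps)
  ultimately show ?thesis by (simp add: bessel_term_Suc C_def)
qed

lemma has_integral_ln_kernel_of_ode:
  fixes S S' :: "real \<Rightarrow> real"
  assumes "0 \<le> \<rho>"
    and cont: "continuous_on {0..\<rho>} S" "continuous_on {0..\<rho>} S'"
    and deriv: "\<And>t. t \<in> {0<..<\<rho>} \<Longrightarrow> (S has_real_derivative S' t) (at t)"
    and ode: "\<And>t. t \<in> {0<..<\<rho>} \<Longrightarrow> ((\<lambda>t. t * S' t) has_real_derivative c * t * S t) (at t)"
  shows "((\<lambda>t. c * (t * S t * ln (\<rho> / t))) has_integral S \<rho> - S 0) {0..\<rho>}"
proof -
  define G where "G t = t * S' t * ln (\<rho> / t) + S t" for t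
  have "((\<lambda>t. c * (t * S t * ln (\<rho> / t))) has_integral G \<rho> - G 0) {0..\<rho>}"
  proof (rule fundamental_theorem_of_calculus_interior[OF assms(1)])
    show "continuous_on {0..\<rho>} G"
      unfolding G_def by (intro continuous_intros continuous_on_mult_mult_ln_div cont)
    fix t assume t: "t \<in> {0<..<\<rho>}"
    have ln: "((\<lambda>t. ln (\<rho> / t)) has_real_derivative - 1 / t) (at t)"
      using t by (auto intro!: derivative_eq_intros simp: field_simps power2_eq_square)
    have "(G has_real_derivative c * t * S t * ln (\<rho> / t) + - 1 / t * (t * S' t) + S' t) (at t)"
      unfolding G_def by (rule DERIV_add[OF DERIV_mult[OF ode[OF t] ln] deriv[OF t]])
    also have "c * t * S t * ln (\<rho> / t) + - 1 / t * (t * S' t) + S' t = c * (t * S t * ln (\<rho> / t))"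
      using t by simp
    finally show "(G has_vector_derivative c * (t * S t * ln (\<rho> / t))) (at t)"
      by (simp add: has_real_derivative_iff_has_vector_derivative)
  qed
  then show ?thesis by (cases "\<rho> = 0") (simp_all add: G_def)
qed

lemma has_integral_abs_le:
  fixes f g :: "'a::euclidean_space \<Rightarrow> real"
  assumes "(f has_integral i) A" "(g has_integral j) A" "\<And>x. x \<in> A \<Longrightarrow> \<bar>f x\<bar> \<le> g x"
  shows "\<bar>i\<bar> \<le> j"
proof -
  have "i \<le> j"
    by (rule has_integral_le[OF assms(1,2)]) (use assms(3) abs_le_D1 in blast)
  moreover have "- i \<le> j"
    by (rule has_integral_le[OF has_integral_neg[OF assms(1)] assms(2)])
      (use assms(3) abs_le_D2 in blast)
  ultimately show ?thesis by linarith
qed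

lemma has_integral_volterra_partial_sum_defect:
  fixes S :: "real \<Rightarrow> real"
  assumes "((\<lambda>t. \<mu>\<^sup>2 * (t * S t * ln (s / t))) has_integral S s - S 0) {0..s}" "0 \<le> s"
  shows "((\<lambda>t. \<mu>\<^sup>2 * (t * (S t - S 0 * (\<Sum>k<n. bessel_term (\<mu> * t) k)) * ln (s / t)))
           has_integral S s - S 0 * (\<Sum>k<Suc n. bessel_term (\<mu> * s) k)) {0..s}"
proof -
  have "((\<lambda>t. \<Sum>k<n. \<mu>\<^sup>2 * (t * bessel_term (\<mu> * t) k * ln (s / t))) has_integral
      (\<Sum>k<n. bessel_term (\<mu> * s) (Suc k))) {0..s}"
    by (intro has_integral_sum finite_lessThan has_integral_bessel_term assms(2))
  from has_integral_diff[OF assms(1) has_integral_mult_right[OF this, of "S 0"]]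
  have "((\<lambda>t. \<mu>\<^sup>2 * (t * (S t - S 0 * (\<Sum>k<n. bessel_term (\<mu> * t) k)) * ln (s / t)))
      has_integral S s - S 0 * (1 + (\<Sum>k<n. bessel_term (\<mu> * s) (Suc k)))) {0..s}"
    by (simp add: sum_distrib_left algebra_simps)
  moreover have "1 + (\<Sum>k<n. bessel_term (\<mu> * s) (Suc k)) = (\<Sum>k<Suc n. bessel_term (\<mu> * s) k)"
    by (subst sum.lessThan_Suc_shift) simp
  ultimately show ?thesis by simp
qed

lemma volterra_bessel_partial_sum_error:
  fixes S :: "real \<Rightarrow> real"
  assumes bound: "\<And>t. t \<in> {0..r} \<Longrightarrow> \<bar>S t\<bar> \<le> B"
    and volterra: "\<And>\<rho>. \<rho> \<in> {0..r} \<Longrightarrow>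
      ((\<lambda>t. \<mu>\<^sup>2 * (t * S t * ln (\<rho> / t))) has_integral S \<rho> - S 0) {0..\<rho>}"
    and "s \<in> {0..r}"
  shows "\<bar>S s - S 0 * (\<Sum>k<n. bessel_term (\<mu> * s) k)\<bar> \<le> B * bessel_term (\<mu> * s) n"
  using \<open>s \<in> {0..r}\<close>
proof (induction n arbitrary: s)
  case 0
  then show ?case using bound by simp
next
  case (Suc n)
  define E where "E t = S t - S 0 * (\<Sum>k<n. bessel_term (\<mu> * t) k)" for t
  have s: "0 \<le> s" "s \<le> r" using Suc.prems by auto
  have "((\<lambda>t. \<mu>\<^sup>2 * (t * E t * ln (s / t))) has_integral
      S s - S 0 * (\<Sum>k<Suc n. bessel_term (\<mu> * s) k)) {0..s}"
    unfolding E_def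
    by (rule has_integral_volterra_partial_sum_defect[OF volterra[OF Suc.prems] s(1)])
  moreover have "((\<lambda>t. B * (\<mu>\<^sup>2 * (t * bessel_term (\<mu> * t) n * ln (s / t)))) has_integral
      B * bessel_term (\<mu> * s) (Suc n)) {0..s}"
    by (rule has_integral_mult_right[OF has_integral_bessel_term[OF s(1)]])
  moreover have "\<bar>\<mu>\<^sup>2 * (t * E t * ln (s / t))\<bar>
      \<le> B * (\<mu>\<^sup>2 * (t * bessel_term (\<mu> * t) n * ln (s / t)))" if "t \<in> {0..s}" for t
  proof -
    have t: "0 \<le> t" and ln: "0 \<le> ln (s / t)"
      using that by (cases "t = 0"; auto intro!: ln_ge_zero simp: field_simps)+
    have "\<bar>E t\<bar> \<le> B * bessel_term (\<mu> * t) n"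
      unfolding E_def using Suc.IH[of t] that s by simp
    then have "\<mu>\<^sup>2 * t * ln (s / t) * \<bar>E t\<bar> \<le> \<mu>\<^sup>2 * t * ln (s / t) * (B * bessel_term (\<mu> * t) n)"
      using t ln by (intro mult_left_mono) auto
    then show ?thesis
      using t ln by (simp add: abs_mult mult_ac)
  qed
  ultimately show ?case by (rule has_integral_abs_le)
qed

lemma volterra_solution_eq_bessel_I0:
  fixes S :: "real \<Rightarrow> real"
  assumes "continuous_on {0..r} S"
    and volterra: "\<And>\<rho>. \<rho> \<in> {0..r} \<Longrightarrow>
      ((\<lambda>t. \<mu>\<^sup>2 * (t * S t * ln (\<rho> / t))) has_integral S \<rho> - S 0) {0..\<rho>}"
    and \<rho>: "\<rho> \<in> {0..r}"
  shows "S \<rho> = S 0 * bessel_I0 (\<mu> * \<rho>)"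
proof -
  have "bounded (S ` {0..r})"
    by (rule compact_imp_bounded[OF compact_continuous_image[OF assms(1) compact_Icc]])
  then obtain B where "\<forall>y \<in> S ` {0..r}. norm y \<le> B"
    by (auto simp: bounded_iff)
  then have B: "\<And>t. t \<in> {0..r} \<Longrightarrow> \<bar>S t\<bar> \<le> B"
    by auto
  have "\<forall>n. norm (S \<rho> - S 0 * (\<Sum>k<n. bessel_term (\<mu> * \<rho>) k)) \<le> B * bessel_term (\<mu> * \<rho>) n"
    using volterra_bessel_partial_sum_error[OF B volterra \<rho>] by simp
  moreover have "(\<lambda>n. B * bessel_term (\<mu> * \<rho>) n) \<longlonglongrightarrow> 0"
    using tendsto_mult_left[OF summable_LIMSEQ_zero[OF summable_bessel_term], of B] by simp
  ultimately have "(\<lambda>n. S \<rho> - S 0 * (\<Sum>k<n. bessel_term (\<mu> * \<rho>) k)) \<longlonglongrightarrow> 0"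
    by (rule Lim_null_comparison[OF always_eventually])
  from tendsto_diff[OF tendsto_const[of "S \<rho>"] this]
  have "(\<lambda>n. S 0 * (\<Sum>k<n. bessel_term (\<mu> * \<rho>) k)) \<longlonglongrightarrow> S \<rho>"
    by simp
  moreover have "(\<lambda>n. S 0 * (\<Sum>k<n. bessel_term (\<mu> * \<rho>) k)) \<longlonglongrightarrow> S 0 * bessel_I0 (\<mu> * \<rho>)"
    unfolding bessel_I0_eq_suminf
    by (intro tendsto_mult_left summable_LIMSEQ summable_bessel_term)
  ultimately show ?thesis by (rule LIMSEQ_unique)
qed

section \<open>Circle integrals of panharmonic functions\<close>

locale panharmonic_disc =
  fixes \<mu> :: real and D :: "(real^2) set" and u :: "real^2 \<Rightarrow> real" and x :: "real^2" and r :: real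
  assumes open_domain: "open D" and panharmonic: "panharmonic \<mu> D u"
    and cball_subset: "cball x r \<subseteq> D"
begin

lemma continuous_on_u: "continuous_on D u"
  and has_partial_u: "has_partial_on i u D"
  and continuous_on_partial_u: "continuous_on D (partial i u)"
  and has_partial_partial_u: "has_partial_on j (partial i u) D"
  and continuous_on_partial_partial_u: "continuous_on D (partial j (partial i u))"
  using panharmonic by (simp_all add: panharmonic_def C2_on_def)

lemma laplacian_u: "y \<in> D \<Longrightarrow> laplacian u y = \<mu>\<^sup>2 * u y"
  using panharmonic by (simp add: panharmonic_def)

lemma polar_point_in_domain: "\<rho> \<in> {0..r} \<Longrightarrow> x + \<rho> *\<^sub>R rad_dir t \<in> D"
  using cball_subset by (auto simp: dist_norm subset_iff)

definition circle_integral_dr :: "real \<Rightarrow> real" where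
  "circle_integral_dr \<rho> = integral {0..2*pi} (\<lambda>t. dir_deriv u (x + \<rho> *\<^sub>R rad_dir t) (rad_dir t))"

definition circle_integral_drr :: "real \<Rightarrow> real" where
  "circle_integral_drr \<rho> =
     integral {0..2*pi} (\<lambda>t. dir_deriv2 u (x + \<rho> *\<^sub>R rad_dir t) (rad_dir t) (rad_dir t))"

lemma continuous_on_polar_u:
  "continuous_on ({0..r} \<times> B) (\<lambda>p. u (x + fst p *\<^sub>R rad_dir (snd p)))"
  by (rule continuous_on_polar[OF continuous_on_u cball_subset])

lemma continuous_on_polar_dr:
  "continuous_on ({0..r} \<times> B) (\<lambda>p. dir_deriv u (x + fst p *\<^sub>R rad_dir (snd p)) (rad_dir (snd p)))"
  unfolding dir_deriv_def rad_dir_nth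
  by (intro continuous_intros continuous_on_polar[OF continuous_on_partial_u cball_subset])

lemma continuous_on_polar_drr:
  "continuous_on ({0..r} \<times> B)
     (\<lambda>p. dir_deriv2 u (x + fst p *\<^sub>R rad_dir (snd p)) (rad_dir (snd p)) (rad_dir (snd p)))"
  unfolding dir_deriv2_def dir_deriv_def rad_dir_nth
  by (intro continuous_intros continuous_on_polar[OF continuous_on_partial_partial_u cball_subset])

lemma has_real_derivative_circle_integral:
  "\<rho> \<in> {0..r} \<Longrightarrow>
     (circle_integral u x has_real_derivative circle_integral_dr \<rho>) (at \<rho> within {0..r})"
  unfolding circle_integral_def[abs_def] circle_integral_dr_def
  by (rule has_real_derivative_integral_param[OF has_real_derivative_comp_dir_deriv[OF open_domain
        has_partial_u continuous_on_partial_u has_vector_derivative_polar_radius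
        polar_point_in_domain] continuous_on_polar_u continuous_on_polar_dr])

lemma has_real_derivative_circle_integral_dr:
  "\<rho> \<in> {0..r} \<Longrightarrow>
     (circle_integral_dr has_real_derivative circle_integral_drr \<rho>) (at \<rho> within {0..r})"
  unfolding circle_integral_dr_def[abs_def] circle_integral_drr_def
  using has_real_derivative_dir_deriv_comp[OF open_domain has_partial_partial_u
      continuous_on_partial_partial_u has_vector_derivative_polar_radius polar_point_in_domain
      has_vector_derivative_const]
  by (intro has_real_derivative_integral_param continuous_on_polar_dr continuous_on_polar_drr) auto

lemma has_integral_angular_term:
  assumes "\<rho> \<in> {0..r}"
  shows "((\<lambda>t. \<rho> * dir_deriv2 u (x + \<rho> *\<^sub>R rad_dir t) (ang_dir t) (ang_dir t)
            - dir_deriv u (x + \<rho> *\<^sub>R rad_dir t) (rad_dir t)) has_integral 0) {0..2*pi}"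
proof -
  define W where "W = (\<lambda>t. dir_deriv u (x + \<rho> *\<^sub>R rad_dir t) (ang_dir t))"
  have "(W has_real_derivative \<rho> * dir_deriv2 u (x + \<rho> *\<^sub>R rad_dir t) (ang_dir t) (ang_dir t)
      - dir_deriv u (x + \<rho> *\<^sub>R rad_dir t) (rad_dir t)) (at t)" for t
    using has_real_derivative_dir_deriv_comp[OF open_domain has_partial_partial_u
        continuous_on_partial_partial_u has_vector_derivative_polar_angle
        polar_point_in_domain[OF assms] has_vector_derivative_ang_dir]
    by (simp add: W_def)
  then have "((\<lambda>t. \<rho> * dir_deriv2 u (x + \<rho> *\<^sub>R rad_dir t) (ang_dir t) (ang_dir t)
      - dir_deriv u (x + \<rho> *\<^sub>R rad_dir t) (rad_dir t)) has_integral W (2 * pi) - W 0) {0..2*pi}"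
    by (intro fundamental_theorem_of_calculus)
      (auto simp: has_real_derivative_iff_has_vector_derivative[symmetric] intro: DERIV_subset)
  then show ?thesis by (simp add: W_def rad_dir_2pi ang_dir_2pi)
qed

lemma circle_integral_ode:
  assumes "\<rho> \<in> {0..r}"
  shows "circle_integral_dr \<rho> + \<rho> * circle_integral_drr \<rho> = \<mu>\<^sup>2 * \<rho> * circle_integral u x \<rho>"
proof -
  define p where "p t = x + \<rho> *\<^sub>R rad_dir t" for t
  have "((\<lambda>t. dir_deriv u (p t) (rad_dir t) + \<rho> * dir_deriv2 u (p t) (rad_dir t) (rad_dir t)
        + (\<rho> * dir_deriv2 u (p t) (ang_dir t) (ang_dir t) - dir_deriv u (p t) (rad_dir t)))
      has_integral circle_integral_dr \<rho> + \<rho> * circle_integral_drr \<rho> + 0) {0..2*pi}"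
    unfolding circle_integral_dr_def circle_integral_drr_def p_def
    by (intro has_integral_add has_integral_mult_right has_integral_angular_term[OF assms]
        has_integral_integral_slice[OF continuous_on_polar_dr assms, simplified]
        has_integral_integral_slice[OF continuous_on_polar_drr assms, simplified])
  moreover have "((\<lambda>t. \<rho> * laplacian u (p t)) has_integral \<mu>\<^sup>2 * \<rho> * circle_integral u x \<rho>)
      {0..2*pi}"
  proof -
    have "((\<lambda>t. \<mu>\<^sup>2 * \<rho> * u (p t)) has_integral \<mu>\<^sup>2 * \<rho> * circle_integral u x \<rho>) {0..2*pi}"
      unfolding circle_integral_def p_def
      by (intro has_integral_mult_right has_integral_integral_slice[OF continuous_on_polar_u assms,
            simplified])
    then show ?thesis
      using laplacian_u[OF polar_point_in_domain[OF assms]] by (simp add: p_def mult_ac)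
  qed
  ultimately show ?thesis
    unfolding polar_laplacian using has_integral_unique by simp
qed

lemma continuous_on_circle_integral: "continuous_on {0..r} (circle_integral u x)"
  by (rule DERIV_continuous_on[OF has_real_derivative_circle_integral])

lemma continuous_on_circle_integral_dr: "continuous_on {0..r} circle_integral_dr"
  by (rule DERIV_continuous_on[OF has_real_derivative_circle_integral_dr])

lemma circle_integral_volterra:
  assumes "\<rho> \<in> {0..r}"
  shows "((\<lambda>t. \<mu>\<^sup>2 * (t * circle_integral u x t * ln (\<rho> / t))) has_integral
           circle_integral u x \<rho> - circle_integral u x 0) {0..\<rho>}"
proof (rule has_integral_ln_kernel_of_ode)
  show "0 \<le> \<rho>" using assms by simp
  show "continuous_on {0..\<rho>} (circle_integral u x)" "continuous_on {0..\<rho>} circle_integral_dr"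
    using assms by (auto intro: continuous_on_subset[OF continuous_on_circle_integral]
        continuous_on_subset[OF continuous_on_circle_integral_dr])
  fix t assume "t \<in> {0<..<\<rho>}"
  then have t: "t \<in> {0..r}" and at: "at t within {0..r} = at t"
    using assms by (auto intro: at_within_interior)
  show "(circle_integral u x has_real_derivative circle_integral_dr t) (at t)"
    using has_real_derivative_circle_integral[OF t] by (simp only: at)
  have "((\<lambda>t. t * circle_integral_dr t) has_real_derivative
      1 * circle_integral_dr t + circle_integral_drr t * t) (at t)"
    using DERIV_mult[OF DERIV_ident has_real_derivative_circle_integral_dr[OF t]] by (simp only: at)
  then show "((\<lambda>t. t * circle_integral_dr t) has_real_derivative
      \<mu>\<^sup>2 * t * circle_integral u x t) (at t)"
    using circle_integral_ode[OF t] by (simp add: mult.commute)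
qed

lemma circle_integral_eq_bessel_I0:
  assumes "\<rho> \<in> {0..r}"
  shows "circle_integral u x \<rho> = 2 * pi * u x * bessel_I0 (\<mu> * \<rho>)"
  using volterra_solution_eq_bessel_I0[OF continuous_on_circle_integral circle_integral_volterra
      assms]
  by (simp add: circle_integral_def)

lemma continuous_on_polar_ln_kernel:
  assumes "r > 0"
  shows "continuous_on (cbox (vector [0, 0]) (vector [r, 2*pi]))
     (\<lambda>p. p$1 * (u (polar_map x p) * ln (r / dist x (polar_map x p))))"
proof -
  let ?B = "cbox (vector [0, 0]) (vector [r, 2*pi]) :: (real^2) set"
  have B: "p \<in> ?B \<longleftrightarrow> 0 \<le> p$1 \<and> p$1 \<le> r \<and> 0 \<le> p$2 \<and> p$2 \<le> 2*pi" for p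
    by (simp add: mem_box_cart forall_2)
  have "continuous_on ?B (\<lambda>p::real^2. p$1 * ln (r / p$1))"
    by (rule continuous_on_compose2[OF continuous_on_mult_ln_div[OF assms]])
      (auto intro!: continuous_intros simp: B)
  moreover have "continuous_on ?B (\<lambda>p. u (polar_map x p))"
  proof (rule continuous_on_compose2[OF continuous_on_u])
    show "continuous_on ?B (polar_map x)"
      unfolding polar_map_def[abs_def] rad_dir_def by (intro continuous_intros)
    show "polar_map x ` ?B \<subseteq> D"
      by (auto intro: polar_point_in_domain simp: B polar_map_def)
  qed
  ultimately have "continuous_on ?B (\<lambda>p. p$1 * ln (r / p$1) * u (polar_map x p))"
    by (rule continuous_on_mult)
  then show ?thesis
    by (rule continuous_on_eq) (auto simp: B)
qed

lemma integral_ball_ln_kernel: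
  assumes "r > 0"
  shows "integral (ball x r) (\<lambda>y. u y * ln (r / dist x y)) =
           integral {0..r} (\<lambda>\<rho>. \<rho> * circle_integral u x \<rho> * ln (r / \<rho>))"
proof -
  have "integral (ball x r) (\<lambda>y. u y * ln (r / dist x y)) =
      integral {0..r} (\<lambda>\<rho>. integral {0..2*pi}
        (\<lambda>t. \<rho> * (u (x + \<rho> *\<^sub>R rad_dir t) * ln (r / dist x (x + \<rho> *\<^sub>R rad_dir t)))))"
    by (rule integral_ball_polar[OF continuous_on_polar_ln_kernel[OF assms]])
  also have "\<dots> = integral {0..r}
      (\<lambda>\<rho>. integral {0..2*pi} (\<lambda>t. \<rho> * ln (r / \<rho>) * u (x + \<rho> *\<^sub>R rad_dir t)))"
    by (intro integral_cong) (simp add: dist_norm)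
  finally show ?thesis
    by (simp add: circle_integral_def ac_simps)
qed

end

theorem theorem5p1:
  fixes D :: "(real^2) set" and u :: "real^2 \<Rightarrow> real" and \<mu> r :: real and x :: "real^2"
  assumes "open D" and "connected D"
    and "\<mu> \<noteq> 0" and "panharmonic \<mu> D u"
    and "x \<in> D" and "r > 0" and "cball x r \<subseteq> D"
  shows "a_fun (\<mu> * r) * u x =
           1 / (pi * r\<^sup>2) * integral (ball x r) (\<lambda>y. u y * ln (r / dist x y))"
proof -
  interpret panharmonic_disc \<mu> D u x r
    using assms by unfold_locales
  have r: "r \<in> {0..r}" using \<open>r > 0\<close> by simp
  define I where "I = integral {0..r} (\<lambda>\<rho>. \<rho> * circle_integral u x \<rho> * ln (r / \<rho>))"
  have "\<mu>\<^sup>2 * I = circle_integral u x r - circle_integral u x 0"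
    using integral_unique[OF circle_integral_volterra[OF r]] by (simp add: I_def)
  also have "\<dots> = 2 * pi * u x * (bessel_I0 (\<mu> * r) - 1)"
    using circle_integral_eq_bessel_I0[OF r]
    by (simp add: circle_integral_def[of u x 0] algebra_simps)
  finally have I: "I = 2 * pi * u x * (bessel_I0 (\<mu> * r) - 1) / \<mu>\<^sup>2"
    using \<open>\<mu> \<noteq> 0\<close> by (simp add: nonzero_eq_divide_eq mult.commute)
  show ?thesis
    unfolding integral_ball_ln_kernel[OF \<open>r > 0\<close>, folded I_def] I a_fun_def
    using \<open>\<mu> \<noteq> 0\<close> \<open>r > 0\<close> by (simp add: field_simps power2_eq_square)
qed

end
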